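(* Let $\mathcal S$ be an aperiodic primitive qubit spin substitution with spin matrix $W$, and let $\chi\in\widehat G$. Suppose $\mathcal S$ is $\chi$-unitary. Then $\mathcal S^M$ is also $\chi$-unitary in the sense that for every $M\ge1$, $$\sum_{\vec d\in\mathcal D}\chi\big(\pi_G(\mathcal S^M_{\vec i}(\mathsf d))\big)\,\overline{\chi\big(\pi_G(\mathcal S^M_{\vec j}(\mathsf d))\big)}=0$$ for all $\vec i,\vec j\in\mathcal D^{(M)}$ whose $(M-1)$st digits $i^{(M-1)}\neq j^{(M-1)}$ in the $(Q,\mathcal D)$-adic expansion are distinct (here $\mathsf d$ is the spin-free letter for $\vec d$).
   Context: $Q$ is an expansive endomorphism of $\mathbb Z^m$ and $\mathcal D$ a complete set of coset representatives of $\mathbb Z^m/Q\mathbb Z^m$; $\mathcal D^{(0)}=\{0\}$, $\mathcal D^{(n)}=Q\mathcal D^{(n-1)}+\mathcal D$, each $\vec i\in\mathcal D^{(n)}$ expanding uniquely as $\sum_{\ell=0}^{n-1}Q^\ell i^{(\ell)}$, $i^{(\ell)}\in\mathcal D$. $G$ is a finite abelian group, $W:\mathcal D\times\mathcal D\to G$, alphabet $G\times\mathcal D$ with letters $g\mathsf d$ (spin-free: $g=e$), spin substitution $\mathcal S(g\mathsf d,\vec d')=(gW(\vec d,\vec d'))\mathsf d'$, $M$-supertiles $\mathcal S^M_{\vec i}(\mathsf a)=\mathcal S_{i^{(0)}}(\cdots\mathcal S_{i^{(M-1)}}(\mathsf a)\cdots)$ where $\mathcal S_{\vec d}(\mathsf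 a)=\mathcal S(\mathsf a,\vec d)$; $\pi_G(g\mathsf d)=g$. Primitive: the substitution matrix $M_{\mathsf a\mathsf b}=\#\{\vec d:\mathcal S(\mathsf b,\vec d)=\mathsf a\}$ has a positive power; aperiodic: no configuration in the associated subshift $\Sigma$ (configurations in $(G\times\mathcal D)^{\mathbb Z^m}$ whose rectangular subpatterns occur in supertiles) has a nonzero period. $\chi(W)$ is the matrix $(\chi(W(\vec d,\vec d')))_{\vec d,\vec d'}$; $\mathcal S$ is $\chi$-unitary if $\frac{1}{\sqrt{|\mathcal D|}}\chi(W)$ is unitary. *)

theory Defs
  imports "HOL-Analysis.Analysis"
begin

definition expansive :: "int^'m^'m \<Rightarrow> bool" where
  "expansive Q \<longleftrightarrow>
     (\<forall>(lam::complex) (v::complex^'m). v \<noteq> 0 \<and>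
        (\<chi> i j. (of_int (Q$i$j) :: complex)) *v v = lam *s v \<longrightarrow> cmod lam > 1)"

definition coset_reps :: "int^'m^'m \<Rightarrow> (int^'m) set \<Rightarrow> bool" where
  "coset_reps Q D \<longleftrightarrow> (\<forall>x. \<exists>!d. d \<in> D \<and> (\<exists>y. x = d + Q *v y))"

text \<open>Value of a digit list [i0, i1, ..., i(n-1)] (lowest digit first): sum of Q^l i(l).\<close>
definition digval :: "int^'m^'m \<Rightarrow> (int^'m) list \<Rightarrow> int^'m" where
  "digval Q ds = foldr (\<lambda>d acc. d + Q *v acc) ds 0"

fun Dn :: "int^'m^'m \<Rightarrow> (int^'m) set \<Rightarrow> nat \<Rightarrow> (int^'m) set" where
  "Dn Q D 0 = {0}"
| "Dn Q D (Suc n) = {Q *v x + d | x d. x \<in> Dn Q D n \<and> d \<in> D}"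

definition digits :: "int^'m^'m \<Rightarrow> (int^'m) set \<Rightarrow> nat \<Rightarrow> int^'m \<Rightarrow> (int^'m) list" where
  "digits Q D n i = (THE ds. length ds = n \<and> set ds \<subseteq> D \<and> digval Q ds = i)"

text \<open>The finite abelian group G is written additively (type class ab_group_add).
Letters are pairs (g, d) with g in G, d in D.\<close>

definition spin_subst :: "(int^'m \<Rightarrow> int^'m \<Rightarrow> 'g::ab_group_add) \<Rightarrow> 'g \<times> (int^'m) \<Rightarrow> int^'m \<Rightarrow> 'g \<times> (int^'m)" where
  "spin_subst W a d' = (fst a + W (snd a) d', d')"

definition supertile_digits :: "(int^'m \<Rightarrow> int^'m \<Rightarrow> 'g::ab_group_add) \<Rightarrow> (int^'m) list \<Rightarrow> 'g \<times> (int^'m) \<Rightarrow> 'g \<times> (int^'m)" where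
  "supertile_digits W ds a = foldr (\<lambda>d b. spin_subst W b d) ds a"

definition supertile :: "int^'m^'m \<Rightarrow> (int^'m) set \<Rightarrow> (int^'m \<Rightarrow> int^'m \<Rightarrow> 'g::ab_group_add)
    \<Rightarrow> nat \<Rightarrow> int^'m \<Rightarrow> 'g \<times> (int^'m) \<Rightarrow> 'g \<times> (int^'m)" where
  "supertile Q D W M i a = supertile_digits W (digits Q D M i) a"

definition subst_matrix :: "(int^'m) set \<Rightarrow> (int^'m \<Rightarrow> int^'m \<Rightarrow> 'g::{ab_group_add,finite})
    \<Rightarrow> 'g \<times> (int^'m) \<Rightarrow> 'g \<times> (int^'m) \<Rightarrow> nat" where
  "subst_matrix D W a b = card {d \<in> D. spin_subst W b d = a}"

fun subst_matrix_pow :: "(int^'m) set \<Rightarrow> (int^'m \<Rightarrow> int^'m \<Rightarrow> 'g::{ab_group_add,finite})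
    \<Rightarrow> nat \<Rightarrow> 'g \<times> (int^'m) \<Rightarrow> 'g \<times> (int^'m) \<Rightarrow> nat" where
  "subst_matrix_pow D W 0 a b = (if a = b then 1 else 0)"
| "subst_matrix_pow D W (Suc k) a b =
     (\<Sum>c \<in> (UNIV :: 'g set) \<times> D. subst_matrix D W a c * subst_matrix_pow D W k c b)"

definition primitive :: "(int^'m) set \<Rightarrow> (int^'m \<Rightarrow> int^'m \<Rightarrow> 'g::{ab_group_add,finite}) \<Rightarrow> bool" where
  "primitive D W \<longleftrightarrow> (\<exists>k>0. \<forall>a \<in> (UNIV :: 'g set) \<times> D. \<forall>b \<in> (UNIV :: 'g set) \<times> D.
       subst_matrix_pow D W k a b > 0)"

definition box :: "int^'m \<Rightarrow> int^'m \<Rightarrow> (int^'m) set" where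
  "box lo hi = {v. \<forall>k. lo$k \<le> v$k \<and> v$k \<le> hi$k}"

definition subshift :: "int^'m^'m \<Rightarrow> (int^'m) set \<Rightarrow> (int^'m \<Rightarrow> int^'m \<Rightarrow> 'g::{ab_group_add,finite})
    \<Rightarrow> (int^'m \<Rightarrow> 'g \<times> (int^'m)) set" where
  "subshift Q D W = {x. \<forall>lo hi. \<exists>M. \<exists>a \<in> (UNIV :: 'g set) \<times> D. \<exists>t.
       \<forall>v \<in> box lo hi. v + t \<in> Dn Q D M \<and> x v = supertile Q D W M (v + t) a}"

definition aperiodic :: "int^'m^'m \<Rightarrow> (int^'m) set \<Rightarrow> (int^'m \<Rightarrow> int^'m \<Rightarrow> 'g::{ab_group_add,finite}) \<Rightarrow> bool" where
  "aperiodic Q D W \<longleftrightarrow> (\<forall>x \<in> subshift Q D W. \<forall>p. p \<noteq> 0 \<longrightarrow> \<not> (\<forall>v. x (v + p) = x v))"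

definition character :: "('g::ab_group_add \<Rightarrow> complex) \<Rightarrow> bool" where
  "character chi \<longleftrightarrow> (\<forall>a b. chi (a + b) = chi a * chi b) \<and> (\<forall>a. cmod (chi a) = 1)"

definition chi_unitary :: "(int^'m) set \<Rightarrow> (int^'m \<Rightarrow> int^'m \<Rightarrow> 'g::ab_group_add) \<Rightarrow> ('g \<Rightarrow> complex) \<Rightarrow> bool" where
  "chi_unitary D W chi \<longleftrightarrow>
     (let U = (\<lambda>d d'. chi (W d d') / complex_of_real (sqrt (real (card D)))) in
       (\<forall>d1 \<in> D. \<forall>d2 \<in> D. (\<Sum>d \<in> D. cnj (U d d1) * U d d2) = (if d1 = d2 then 1 else 0)) \<and>
       (\<forall>d1 \<in> D. \<forall>d2 \<in> D. (\<Sum>d \<in> D. U d1 d * cnj (U d2 d)) = (if d1 = d2 then 1 else 0)))"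

end

theory Submission
  imports Defs
begin

text \<open>The phase that an \<open>M\<close>-supertile of a spin-free letter \<open>d\<close> acquires is
  \<open>W d i^(M-1)\<close> plus a term independent of \<open>d\<close>. Hence the sum in question factors as
  a unimodular constant times the inner product of the columns \<open>i^(M-1)\<close> and
  \<open>j^(M-1)\<close> of \<open>\<chi>(W)\<close>, which vanishes by \<open>\<chi>\<close>-unitarity.\<close>

lemma expansive_imp_inj:
  fixes Q :: "int^'m^'m"
  assumes "expansive Q"
  shows "inj ((*v) Q)"
proof (rule injI, rule ccontr)
  fix y y' :: "int^'m"
  assume eq: "Q *v y = Q *v y'" and ne: "y \<noteq> y'"
  define z where "z = y - y'"
  define v :: "complex^'m" where "v = (\<chi> k. of_int (z$k))"
  have "v \<noteq> 0"
    using ne by (auto simp: v_def z_def vec_eq_iff)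
  moreover have "(\<chi> i j. (of_int (Q$i$j) :: complex)) *v v = (0::complex) *s v"
  proof -
    have "Q *v z = 0"
      using eq by (simp add: z_def matrix_vector_mult_diff_distrib)
    then have "\<And>i. (\<Sum>j\<in>UNIV. Q$i$j * z$j) = 0"
      by (simp add: vec_eq_iff matrix_vector_mult_def)
    then show ?thesis
      by (simp add: vec_eq_iff matrix_vector_mult_def v_def flip: of_int_mult of_int_sum)
  qed
  ultimately show False
    using assms unfolding expansive_def by force
qed

lemma digval_inj:
  assumes "expansive Q" "coset_reps Q D"
  shows "\<lbrakk>length ds = length es; set ds \<subseteq> D; set es \<subseteq> D; digval Q ds = digval Q es\<rbrakk>
    \<Longrightarrow> ds = es"
proof (induction ds arbitrary: es)
  case Nil
  then show ?case by simp
next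
  case (Cons d ds)
  then obtain e es' where es: "es = e # es'"
    by (cases es) auto
  have eq: "d + Q *v digval Q ds = e + Q *v digval Q es'"
    using Cons.prems es by (simp add: digval_def)
  have "d = e"
    using assms(2) Cons.prems(2,3) eq es unfolding coset_reps_def by (metis list.set_intros(1) subsetD)
  moreover have "digval Q ds = digval Q es'"
    using eq \<open>d = e\<close> expansive_imp_inj[OF assms(1)] by (simp add: inj_eq)
  ultimately show ?case
    using Cons es by simp
qed

lemma Dn_has_digits:
  "i \<in> Dn Q D n \<Longrightarrow> \<exists>ds. length ds = n \<and> set ds \<subseteq> D \<and> digval Q ds = i"
proof (induction n arbitrary: i)
  case 0
  then show ?case by (simp add: digval_def)
next
  case (Suc n)
  then obtain x d where i: "i = Q *v x + d" and "x \<in> Dn Q D n" "d \<in> D"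
    by auto
  with Suc.IH obtain ds where "length ds = n \<and> set ds \<subseteq> D \<and> digval Q ds = x"
    by blast
  with i \<open>d \<in> D\<close> show ?case
    by (intro exI[of _ "d # ds"]) (auto simp: digval_def add.commute)
qed

lemma digits_Dn:
  assumes "expansive Q" "coset_reps Q D" "i \<in> Dn Q D n"
  shows "length (digits Q D n i) = n \<and> set (digits Q D n i) \<subseteq> D \<and> digval Q (digits Q D n i) = i"
proof -
  obtain ds where ds: "length ds = n \<and> set ds \<subseteq> D \<and> digval Q ds = i"
    using Dn_has_digits assms(3) by blast
  show ?thesis
    unfolding digits_def by (rule theI[of _ ds]) (use ds digval_inj[OF assms(1,2)] in metis)+
qed

fun chain_phase :: "('d \<Rightarrow> 'd \<Rightarrow> 'g::ab_group_add) \<Rightarrow> 'd list \<Rightarrow> 'g" where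
  "chain_phase W [] = 0"
| "chain_phase W [x] = 0"
| "chain_phase W (x # y # r) = W y x + chain_phase W (y # r)"

lemma supertile_digits_Cons_Cons:
  "supertile_digits W (x # y # r) a = (fst (supertile_digits W (y # r) a) + W y x, x)"
  by (cases r) (simp_all add: supertile_digits_def spin_subst_def)

lemma fst_supertile_digits:
  "ds \<noteq> [] \<Longrightarrow> fst (supertile_digits W ds (g, d)) = g + W d (last ds) + chain_phase W ds"
  by (induction W ds rule: chain_phase.induct)
     (simp_all add: supertile_digits_Cons_Cons, simp_all add: supertile_digits_def spin_subst_def)

lemma chi_unitary_columns_orthogonal:
  assumes "chi_unitary D W chi" "a \<in> D" "b \<in> D" "a \<noteq> b"
  shows "(\<Sum>d\<in>D. chi (W d a) * cnj (chi (W d b))) = 0"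
proof (cases "finite D")
  case True
  define s where "s = complex_of_real (sqrt (real (card D)))"
  have "s \<noteq> 0"
    using True assms(2) by (auto simp: s_def card_gt_0_iff)
  have "(\<Sum>d\<in>D. cnj (chi (W d b) / s) * (chi (W d a) / s)) = 0"
    using assms unfolding chi_unitary_def Let_def s_def by auto
  then have "(\<Sum>d\<in>D. cnj (chi (W d b)) * chi (W d a)) / (s * s) = 0"
    by (simp add: sum_divide_distrib s_def)
  with \<open>s \<noteq> 0\<close> show ?thesis
    by (simp add: mult.commute)
qed simp

lemma supertile_digits_orthogonal:
  assumes "character chi" "chi_unitary D W chi"
    and "ds \<noteq> []" "es \<noteq> []" "last ds \<in> D" "last es \<in> D" "last ds \<noteq> last es"
  shows "(\<Sum>d\<in>D. chi (fst (supertile_digits W ds (0, d))) *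
                  cnj (chi (fst (supertile_digits W es (0, d))))) = 0"
proof -
  have chi_add: "\<And>x y. chi (x + y) = chi x * chi y"
    using assms(1) unfolding character_def by blast
  have "(\<Sum>d\<in>D. chi (fst (supertile_digits W ds (0, d))) *
                  cnj (chi (fst (supertile_digits W es (0, d)))))
      = chi (chain_phase W ds) * cnj (chi (chain_phase W es)) *
        (\<Sum>d\<in>D. chi (W d (last ds)) * cnj (chi (W d (last es))))"
    using assms(3,4) by (simp add: fst_supertile_digits chi_add sum_distrib_left mult_ac)
  also have "\<dots> = 0"
    using chi_unitary_columns_orthogonal[OF assms(2,5-7)] by simp
  finally show ?thesis .
qed

theorem proposition3p17:
  fixes Q :: "int^'m^'m" and D :: "(int^'m) set"
    and W :: "int^'m \<Rightarrow> int^'m \<Rightarrow> 'g::{ab_group_add,finite}"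
    and chi :: "'g \<Rightarrow> complex"
  assumes "expansive Q" and "coset_reps Q D"
    and qubit: "card D = 2"
    and "primitive D W" and "aperiodic Q D W"
    and "character chi"
    and "chi_unitary D W chi"
  shows "\<forall>M \<ge> 1. \<forall>i \<in> Dn Q D M. \<forall>j \<in> Dn Q D M.
           digits Q D M i ! (M - 1) \<noteq> digits Q D M j ! (M - 1) \<longrightarrow>
           (\<Sum>d \<in> D. chi (fst (supertile Q D W M i (0, d))) *
                      cnj (chi (fst (supertile Q D W M j (0, d))))) = 0"
proof (intro allI impI ballI)
  fix M i j
  assume "M \<ge> 1" and "i \<in> Dn Q D M" "j \<in> Dn Q D M"
    and last_ne: "digits Q D M i ! (M - 1) \<noteq> digits Q D M j ! (M - 1)"
  define ds es where "ds = digits Q D M i" and "es = digits Q D M j"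
  have "length ds = M" "set ds \<subseteq> D" "length es = M" "set es \<subseteq> D"
    using digits_Dn[OF assms(1,2)] \<open>i \<in> Dn Q D M\<close> \<open>j \<in> Dn Q D M\<close> by (auto simp: ds_def es_def)
  with \<open>M \<ge> 1\<close> have "ds \<noteq> []" "es \<noteq> []"
    by auto
  with \<open>set ds \<subseteq> D\<close> \<open>set es \<subseteq> D\<close> have "last ds \<in> D" "last es \<in> D"
    by auto
  have "last ds \<noteq> last es"
    using last_ne \<open>ds \<noteq> []\<close> \<open>es \<noteq> []\<close> \<open>length ds = M\<close> \<open>length es = M\<close>
    by (simp add: ds_def es_def last_conv_nth)
  from supertile_digits_orthogonal[OF assms(6,7) \<open>ds \<noteq> []\<close> \<open>es \<noteq> []\<close> \<open>last ds \<in> D\<close>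
      \<open>last es \<in> D\<close> this]
  show "(\<Sum>d \<in> D. chi (fst (supertile Q D W M i (0, d))) *
                  cnj (chi (fst (supertile Q D W M j (0, d))))) = 0"
    by (simp add: supertile_def ds_def es_def)
qed

end
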